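(* For every prime $p$, there exist a conic $Q\subset\mathbb P^2$ defined over $\mathbb F_{p^2}$ and a point $t\in C\cap Q$ (over $\overline{\mathbb F}_p$) such that $[\mathbb F_{p^2}(t):\mathbb F_{p^2}]=p+1$.
   Context: $C\subset\mathbb P^2$ is the Fermat curve $X_1^{p+1}+X_2^{p+1}+X_3^{p+1}=0$. Conics include degenerate ones (zero loci of nonzero homogeneous quadratic forms over $\mathbb F_{p^2}$). $\mathbb F_{p^2}(t)$ is the field generated over $\mathbb F_{p^2}$ by the ratios of coordinates of $t$. *)

theory Defs
  imports "HOL-Algebra.Algebraic_Closure_Type" "HOL-Algebra.Generated_Fields"
begin

text \<open>The ambient algebraically closed field is a type 'k of class alg_closed_field with
  CHAR('k) = p (playing the role of the algebraic closure of F_p).\<close>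

definition finite_subfield :: "nat \<Rightarrow> 'k::field set" where
  "finite_subfield q = {z. z ^ q = z}"

definition on_fermat :: "nat \<Rightarrow> 'k::field \<times> 'k \<times> 'k \<Rightarrow> bool" where
  "on_fermat p t = (case t of (x1, x2, x3) \<Rightarrow> x1 ^ (p+1) + x2 ^ (p+1) + x3 ^ (p+1) = 0)"

definition proj_point :: "'k::field \<times> 'k \<times> 'k \<Rightarrow> bool" where
  "proj_point t = (t \<noteq> (0, 0, 0))"

definition quad_form :: "'k::field \<times> 'k \<times> 'k \<times> 'k \<times> 'k \<times> 'k \<Rightarrow> 'k \<times> 'k \<times> 'k \<Rightarrow> 'k" where
  "quad_form c t = (case c of (a, b, d, e, f, g) \<Rightarrow> case t of (x1, x2, x3) \<Rightarrow>
      a * x1^2 + b * x2^2 + d * x3^2 + e * x1 * x2 + f * x1 * x3 + g * x2 * x3)"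

definition coord_ratios :: "'k::field \<times> 'k \<times> 'k \<Rightarrow> 'k set" where
  "coord_ratios t = (case t of (x1, x2, x3) \<Rightarrow>
      {xi / xj | xi xj. xi \<in> {x1, x2, x3} \<and> xj \<in> {x1, x2, x3} \<and> xj \<noteq> 0})"

definition field_of_point :: "'k::field set \<Rightarrow> 'k \<times> 'k \<times> 'k \<Rightarrow> 'k set" where
  "field_of_point F t = generate_field (ring_of_type_algebra :: 'k ring) (F \<union> coord_ratios t)"

end

theory Submission
  imports Defs "HOL-Algebra.Finite_Extensions"
begin

(* Let z in F_(p^2) be a primitive (p+1)-th root of unity, u = -(1 + z^p), and s a root of
   X^(p+1) = u. Frobenius gives u^p = z u, which puts t = (u : s^2 : u s) on the Fermat curve;
   t also lies on the conic X3^2 = u X1 X2, defined over F_(p^2). Since s^(p^2) = z s, the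
   p + 1 conjugates z^j s are distinct, so 1, s, ..., s^p are linearly independent over F_(p^2);
   as s^(p+1) = u lies in F_(p^2), they span F_(p^2)(s) = F_(p^2)(t). *)

abbreviation type_ring :: "'a::field ring" where "type_ring \<equiv> ring_of_type_algebra"

lemma type_ring_simps [simp]:
  "carrier (type_ring :: 'a::field ring) = UNIV"
  "x \<otimes>\<^bsub>(type_ring :: 'a ring)\<^esub> y = x * y"
  "x \<oplus>\<^bsub>(type_ring :: 'a ring)\<^esub> y = x + y"
  "\<zero>\<^bsub>(type_ring :: 'a ring)\<^esub> = 0"
  "\<one>\<^bsub>(type_ring :: 'a ring)\<^esub> = 1"
  by (simp_all add: ring_of_type_algebra_def)

lemma type_ring_nat_pow [simp]:
  "x [^]\<^bsub>(type_ring :: 'a::field ring)\<lparr>carrier := K\<rparr>\<^esub> (n::nat) = x ^ n"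
  by (induction n) (simp_all add: mult.commute ring_of_type_algebra_def)

lemma type_ring_a_inv [simp]: "\<ominus>\<^bsub>(type_ring :: 'a::field ring)\<^esub> x = - x"
proof -
  interpret ring "type_ring :: 'a ring" by (rule ring_from_type_algebra)
  show ?thesis by (rule minus_equality) auto
qed

lemma type_ring_m_inv [simp]: "(x::'a::field) \<noteq> 0 \<Longrightarrow> inv\<^bsub>(type_ring :: 'a ring)\<^esub> x = inverse x"
  by (rule monoid.inv_char[OF ring.axioms(2)[OF ring_from_type_algebra]]) auto

lemma type_ring_subfieldI:
  fixes K :: "'a::field set"
  assumes "0 \<in> K" "1 \<in> K" "\<And>x y. x \<in> K \<Longrightarrow> y \<in> K \<Longrightarrow> x + y \<in> K"
    "\<And>x. x \<in> K \<Longrightarrow> - x \<in> K" "\<And>x y. x \<in> K \<Longrightarrow> y \<in> K \<Longrightarrow> x * y \<in> K"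
    "\<And>x. x \<in> K \<Longrightarrow> x \<noteq> 0 \<Longrightarrow> inverse x \<in> K"
  shows "subfield K type_ring"
proof -
  interpret field "type_ring :: 'a ring" by (rule field_from_type_algebra)
  show ?thesis
    by (rule subfieldI', rule subringI) (use assms in auto)
qed

lemma freshmans_dream_uminus:
  fixes x :: "'a::comm_ring_1"
  assumes "prime CHAR('a)" "Q = CHAR('a) ^ n"
  shows "(- x) ^ Q = - (x ^ Q)"
proof -
  have "(x + - x) ^ Q = x ^ Q + (- x) ^ Q" by (rule freshmans_dream') fact+
  moreover have "Q \<noteq> 0" using assms prime_gt_0_nat by simp
  ultimately have "x ^ Q + (- x) ^ Q = 0" by (simp add: zero_power)
  then show ?thesis by (simp add: add_eq_0_iff)
qed

lemma subfield_finite_subfield: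
  assumes "prime CHAR('a::field)" "Q = CHAR('a) ^ n"
  shows "subfield (finite_subfield Q :: 'a set) type_ring"
proof -
  have "Q > 0" using assms prime_gt_0_nat by simp
  then show ?thesis
    unfolding finite_subfield_def
    by (rule_tac type_ring_subfieldI)
       (simp_all add: freshmans_dream'[OF assms] freshmans_dream_uminus[OF assms]
         power_mult_distrib power_inverse)
qed

lemma square_eq_Suc_mult_pred: "0 < (p::nat) \<Longrightarrow> p ^ 2 = (p + 1) * (p - 1) + 1"
  by (cases p) (simp_all add: power2_eq_square)

lemma card_roots_eq_degree:
  fixes f :: "'a::alg_closed_field poly"
  assumes "f \<noteq> 0" "\<And>x. poly f x = 0 \<Longrightarrow> poly (pderiv f) x \<noteq> 0"
  shows "card {x. poly f x = 0} = degree f"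
  using assms
proof (induction "degree f" arbitrary: f rule: less_induct)
  case (less f)
  show ?case
  proof (cases "degree f = 0")
    case True
    then obtain c where "f = [:c:]" by (meson degree_eq_zeroE)
    with less.prems show ?thesis by simp
  next
    case False
    then obtain x where x: "poly f x = 0" using alg_closed_imp_poly_has_root by blast
    then obtain g where f: "f = [:-x, 1:] * g" using poly_eq_0_iff_dvd by (blast elim: dvdE)
    have "g \<noteq> 0" using less.prems f by auto
    have deg: "degree f = Suc (degree g)" unfolding f using \<open>g \<noteq> 0\<close> by (subst degree_mult_eq) auto
    have "pderiv [:-x, 1:] = 1" by (simp add: pderiv_pCons)
    then have f': "poly (pderiv f) y = (y - x) * poly (pderiv g) y + poly g y" for y
      unfolding f pderiv_mult by (simp add: algebra_simps)
    have "poly g x \<noteq> 0" using less.prems(2) x f'[of x] by auto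
    moreover have "card {x. poly g x = 0} = degree g"
      using less.hyps[of g] less.prems(2) deg \<open>g \<noteq> 0\<close> f' by (force simp: f)
    moreover have "{y. poly f y = 0} = insert x {y. poly g y = 0}" by (auto simp: f)
    ultimately show ?thesis using deg poly_roots_finite[OF \<open>g \<noteq> 0\<close>] by simp
  qed
qed

lemma card_finite_subfield:
  assumes "prime CHAR('a::alg_closed_field)" "Q = CHAR('a) ^ n" "n > 0"
  shows "card (finite_subfield Q :: 'a set) = Q"
proof -
  define f :: "'a poly" where "f = monom 1 Q + [:0, -1:]"
  have "CHAR('a) \<ge> 2" using assms(1) by (rule prime_ge_2_nat)
  then have "Q \<ge> 2" using self_le_power[of "CHAR('a)" n] assms(2,3) by linarith
  then have deg: "degree f = Q"
    unfolding f_def by (subst degree_add_eq_left) (auto simp: degree_monom_eq)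
  have "of_nat Q = (0::'a)"
    using assms by (simp add: of_nat_eq_0_iff_char_dvd)
  then have "poly (pderiv f) x = -1" for x
    by (simp add: f_def pderiv_add pderiv_monom pderiv_pCons)
  moreover have "f \<noteq> 0" using deg \<open>Q \<ge> 2\<close> by auto
  ultimately have "card {x. poly f x = 0} = Q"
    using card_roots_eq_degree[of f] deg by simp
  moreover have "{x. poly f x = 0} = finite_subfield Q"
    by (auto simp: f_def poly_monom finite_subfield_def)
  ultimately show ?thesis by simp
qed

lemma finite_subfield_has_root_of_unity:
  fixes K :: "'a::field set"
  assumes K: "subfield K type_ring" "finite K" and "d dvd card K - 1"
  shows "\<exists>z\<in>K. \<forall>j. z ^ j = 1 \<longleftrightarrow> d dvd j"
proof -
  define F where "F = (type_ring :: 'a ring)\<lparr>carrier := K\<rparr>"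
  interpret F: field F
    unfolding F_def by (rule ring.subfield_iff(2)[OF ring_from_type_algebra K(1)])
  interpret G: group "Multiplicative_Group.mult_of F" by (rule F.field_mult_group)
  have carrier_F: "carrier F = K" "\<zero>\<^bsub>F\<^esub> = 0" by (simp_all add: F_def ring_of_type_algebra_def)
  then have carrier_G: "carrier (Multiplicative_Group.mult_of F) = K - {0}" by simp
  have "finite (carrier F)" using K(2) by (simp add: carrier_F)
  then obtain a where a: "a \<in> carrier (Multiplicative_Group.mult_of F)"
    and gen: "carrier (Multiplicative_Group.mult_of F) = {a [^]\<^bsub>F\<^esub> i | i::nat. i \<in> UNIV}"
    using F.finite_field_mult_group_has_gen by blast
  have finite_G: "finite (carrier (Multiplicative_Group.mult_of F))"
    using \<open>finite (carrier F)\<close> by simp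
  have "G.ord a \<noteq> 0" using G.ord_ge_1[OF finite_G a] by simp
  have "generate (Multiplicative_Group.mult_of F) {a} = carrier (Multiplicative_Group.mult_of F)"
    using G.generate_pow_nat[OF a \<open>G.ord a \<noteq> 0\<close>] gen unfolding Multiplicative_Group.nat_pow_mult_of by (simp only:)
  then have "G.ord a = card (carrier (Multiplicative_Group.mult_of F))"
    using G.generate_pow_card[OF a] by (simp only:)
  also have "\<dots> = card K - 1"
    unfolding carrier_G using K(2) subringE(2)[OF subfieldE(1)[OF K(1)]] by simp
  finally obtain e where e: "G.ord a = d * e" using assms(3) by (auto elim: dvdE)
  (* the generator a has order card K - 1 = d e, hence a^e has order d *)
  have pow_G: "x [^]\<^bsub>Multiplicative_Group.mult_of F\<^esub> (n::nat) = x ^ n" for x n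
    unfolding Multiplicative_Group.nat_pow_mult_of F_def by simp
  have one_G: "\<one>\<^bsub>Multiplicative_Group.mult_of F\<^esub> = 1"
    by (simp add: F_def ring_of_type_algebra_def)
  define z where "z = a ^ e"
  have z: "z \<in> carrier (Multiplicative_Group.mult_of F)"
    unfolding z_def pow_G[symmetric] using a by (rule G.nat_pow_closed)
  have "e \<noteq> 0" using e \<open>G.ord a \<noteq> 0\<close> by auto
  then have "G.ord z = d"
    unfolding z_def pow_G[symmetric] using G.ord_pow[OF a, of e] e by simp
  then have "z ^ j = 1 \<longleftrightarrow> d dvd j" for j
    using G.pow_eq_id[OF z, of j] by (simp only: pow_G one_G)
  moreover have "z \<in> K" using z by (simp add: carrier_F)
  ultimately show ?thesis by blast
qed

lemma exists_primitive_root_of_unity_Suc_char: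
  assumes "prime p" "CHAR('a::alg_closed_field) = p"
  shows "\<exists>z::'a. \<forall>j. z ^ j = 1 \<longleftrightarrow> p + 1 dvd j"
proof -
  define K :: "'a set" where "K = finite_subfield (p ^ 2)"
  have char: "prime CHAR('a)" "p ^ 2 = CHAR('a) ^ 2" using assms by simp_all
  have "card K = p ^ 2" unfolding K_def by (rule card_finite_subfield[OF char]) simp
  then have "finite K" using prime_gt_0_nat[OF assms(1)] by (intro card_ge_0_finite) simp
  have "card K - 1 = (p + 1) * (p - 1)"
    using square_eq_Suc_mult_pred[OF prime_gt_0_nat[OF assms(1)]] \<open>card K = p ^ 2\<close> by simp
  then have "p + 1 dvd card K - 1" by (simp only: dvd_triv_left)
  then show ?thesis
    using finite_subfield_has_root_of_unity[OF _ \<open>finite K\<close>] subfield_finite_subfield[OF char]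
    unfolding K_def by blast
qed

definition power_span :: "'a::field set \<Rightarrow> 'a \<Rightarrow> nat \<Rightarrow> 'a set" where
  "power_span K s n = {\<Sum>i<n. c i * s ^ i | c. \<forall>i. c i \<in> K}"

lemma power_span_0: "0 \<in> K \<Longrightarrow> power_span K s 0 = {0}"
  unfolding power_span_def by auto

lemma power_span_Suc:
  "power_span K s (Suc n) = ring.line_extension type_ring K (s ^ n) (power_span K s n)"
proof -
  interpret ring "type_ring :: 'a ring" by (rule ring_from_type_algebra)
  have "x \<in> line_extension K (s ^ n) (power_span K s n)" if x: "x \<in> power_span K s (Suc n)" for x
  proof -
    obtain c where c: "\<forall>i. c i \<in> K" "x = (\<Sum>i<Suc n. c i * s ^ i)"
      using x unfolding power_span_def by blast
    then have "x = c n * s ^ n + (\<Sum>i<n. c i * s ^ i)" by (simp add: add.commute)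
    moreover have "(\<Sum>i<n. c i * s ^ i) \<in> power_span K s n"
      unfolding power_span_def using c(1) by blast
    ultimately show ?thesis unfolding line_extension_mem_iff using c(1) by auto
  qed
  moreover have "x \<in> power_span K s (Suc n)" if x: "x \<in> line_extension K (s ^ n) (power_span K s n)" for x
  proof -
    obtain k c where "k \<in> K" "\<forall>i. c i \<in> K" and x: "x = k * s ^ n + (\<Sum>i<n. c i * s ^ i)"
      using x unfolding line_extension_mem_iff power_span_def by auto
    have "(\<Sum>i<n. (c(n := k)) i * s ^ i) = (\<Sum>i<n. c i * s ^ i)" by (intro sum.cong) auto
    then have "x = (\<Sum>i<Suc n. (c(n := k)) i * s ^ i)" by (simp add: x add.commute)
    moreover have "\<forall>i. (c(n := k)) i \<in> K" using \<open>k \<in> K\<close> \<open>\<forall>i. c i \<in> K\<close> by simp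
    ultimately show ?thesis unfolding power_span_def by blast
  qed
  ultimately show ?thesis by blast
qed

lemma dimension_power_span:
  assumes "0 \<in> K" "\<And>m. m < n \<Longrightarrow> s ^ m \<notin> power_span K s m"
  shows "ring.dimension type_ring n K (power_span K s n)"
  using assms(2)
proof (induction n)
  interpret ring "type_ring :: 'a ring" by (rule ring_from_type_algebra)
  case 0
  show ?case using zero_dim[of K] power_span_0[OF assms(1)] by simp
next
  interpret ring "type_ring :: 'a ring" by (rule ring_from_type_algebra)
  case (Suc n)
  show ?case unfolding power_span_Suc by (rule Suc_dim) (use Suc in auto)
qed

lemma simple_extension_eq_power_span:
  fixes s :: "'a::field"
  assumes K: "subfield K type_ring" and "s ^ Suc n \<in> K"
  shows "ring.simple_extension type_ring K s = power_span K s (Suc n)"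
proof -
  interpret field "type_ring :: 'a ring" by (rule field_from_type_algebra)
  note K_closed = subringE[OF subfieldE(1)[OF K], simplified]
  have "x \<in> power_span K s (Suc n)" if "x \<in> simple_extension K s" for x
    using that
  proof induction
    case zero
    have "(\<Sum>i<Suc n. 0 * s ^ i) = 0" by simp
    then show ?case using K_closed(2) unfolding power_span_def by force
  next
    case (lin x k)
    then obtain c where c: "\<forall>i. c i \<in> K" "x = (\<Sum>i<Suc n. c i * s ^ i)"
      unfolding power_span_def by blast
    define d where "d i = (if i = 0 then c n * s ^ Suc n + k else c (i - 1))" for i
    have "x * s + k = (\<Sum>i<n. c i * s ^ Suc i) + (c n * s ^ Suc n + k)"
      by (simp add: c(2) sum_distrib_left algebra_simps)
    also have "\<dots> = (\<Sum>i<Suc n. d i * s ^ i)"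
      by (simp add: sum.lessThan_Suc_shift d_def add.commute del: sum.lessThan_Suc)
    finally have "x * s + k = (\<Sum>i<Suc n. d i * s ^ i)" .
    moreover have "\<forall>i. d i \<in> K" using c(1) lin.hyps(2) assms(2) K_closed by (simp add: d_def)
    ultimately show ?case unfolding power_span_def by auto
  qed
  moreover have "power_span K s (Suc n) \<subseteq> simple_extension K s"
  proof -
    define E where "E = simple_extension K s"
    have E: "subring E type_ring" "K \<subseteq> E" "s \<in> E"
      using simple_extension_is_subring simple_extension_incl simple_extension_mem subfieldE(1)[OF K]
      by (auto simp: E_def)
    note E_closed = subringE[OF E(1), simplified]
    have "s ^ i \<in> E" for i by (induction i) (use E E_closed in auto)
    then have "(\<Sum>i<m. c i * s ^ i) \<in> E" if "\<forall>i. c i \<in> K" for c m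
      using that E(2) by (induction m) (auto intro!: E_closed)
    then show ?thesis unfolding power_span_def E_def by blast
  qed
  ultimately show ?thesis by blast
qed

lemma power_not_in_power_span:
  fixes s z :: "'a::field"
  assumes char: "prime CHAR('a)" "Q = CHAR('a) ^ r" and K: "K \<subseteq> finite_subfield Q"
    and "z ^ Q = z" "s ^ Q = z * s" and inj: "inj_on (\<lambda>j. z ^ j * s) {..n}"
  shows "s ^ n \<notin> power_span K s n"
proof
  (* The Frobenius x \<mapsto> x^(Q^j) fixes the c i, so applied to s^n = (\<Sum>i<n. c i * s^i) it shows
     that the n + 1 conjugates z^j s with j \<le> n are roots of the monic polynomial X^n - \<Sum> c i X^i. *)
  assume "s ^ n \<in> power_span K s n"
  then obtain c where c: "\<forall>i. c i \<in> K" and s_n: "s ^ n = (\<Sum>i<n. c i * s ^ i)"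
    unfolding power_span_def by blast
  have c_fixed: "c i ^ (Q ^ j) = c i" for i j
  proof (induction j)
    case (Suc j)
    have "c i ^ Q = c i" using c K by (auto simp: finite_subfield_def)
    then show ?case using Suc by (simp add: power_mult mult.commute)
  qed simp
  have s_conj: "s ^ (Q ^ j) = z ^ j * s" for j
  proof (induction j)
    case (Suc j)
    have "s ^ (Q ^ Suc j) = (s ^ (Q ^ j)) ^ Q" by (simp add: power_mult[symmetric] mult.commute)
    also have "\<dots> = (z ^ j * s) ^ Q" by (simp only: Suc)
    also have "\<dots> = (z ^ Q) ^ j * s ^ Q"
      by (simp add: power_mult_distrib power_mult[symmetric] mult.commute)
    also have "\<dots> = z ^ Suc j * s" using assms(4,5) by (simp add: mult_ac)
    finally show ?case .
  qed simp
  define f :: "'a poly" where "f = monom 1 n - (\<Sum>i<n. monom (c i) i)"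
  have "coeff f n = 1" by (simp add: f_def coeff_sum)
  then have "f \<noteq> 0" by auto
  have "degree f \<le> n" unfolding f_def
    by (intro degree_diff_le degree_monom_le degree_sum_le) (auto intro: order.trans[OF degree_monom_le])
  have "poly f (z ^ j * s) = 0" for j
  proof -
    have "(s ^ (Q ^ j)) ^ n = (\<Sum>i<n. c i * s ^ i) ^ (Q ^ j)"
      by (simp add: s_n[symmetric] power_mult[symmetric] mult.commute)
    also have "\<dots> = (\<Sum>i<n. (c i * s ^ i) ^ (Q ^ j))"
      by (rule freshmans_dream_sum'[OF char(1), of _ "r * j"]) (simp add: char(2) power_mult)
    also have "\<dots> = (\<Sum>i<n. c i ^ (Q ^ j) * (s ^ (Q ^ j)) ^ i)"
      by (simp add: power_mult_distrib power_mult[symmetric] mult.commute)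
    finally show ?thesis by (simp add: f_def poly_sum poly_monom s_conj c_fixed)
  qed
  then have "(\<lambda>j. z ^ j * s) ` {..n} \<subseteq> {x. poly f x = 0}" by auto
  then have "card ((\<lambda>j. z ^ j * s) ` {..n}) \<le> degree f"
    using card_mono[OF poly_roots_finite[OF \<open>f \<noteq> 0\<close>]] card_poly_roots_bound[OF \<open>f \<noteq> 0\<close>]
    by (meson order.trans)
  then show False using card_image[OF inj] \<open>degree f \<le> n\<close> by simp
qed

lemma field_of_point_eq_simple_extension:
  fixes u s :: "'a::field"
  assumes K: "subfield K type_ring" and E: "subfield (ring.simple_extension type_ring K s) type_ring"
    and "u \<in> K" "u \<noteq> 0"
  shows "field_of_point K (u, s ^ 2, u * s) = ring.simple_extension type_ring K s"
proof -
  interpret field "type_ring :: 'a ring" by (rule field_from_type_algebra)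
  define E where "E = simple_extension K s"
  define G where "G = generate_field type_ring (K \<union> coord_ratios (u, s ^ 2, u * s))"
  note E_closed = subringE[OF subfieldE(1)[OF E[folded E_def]], simplified]
  have "K \<subseteq> E" "s \<in> E"
    using simple_extension_incl simple_extension_mem subfieldE(1)[OF K] by (auto simp: E_def)
  then have "coord_ratios (u, s ^ 2, u * s) \<subseteq> E"
    using \<open>u \<in> K\<close> E_closed subfield_m_inv(1)[OF E[folded E_def]]
    by (auto simp: coord_ratios_def power2_eq_square divide_inverse)
  then have "G \<subseteq> E"
    unfolding G_def using generate_field_min_subfield1 E \<open>K \<subseteq> E\<close> by (simp add: E_def)
  moreover have "E \<subseteq> G"
  proof -
    have G: "subfield G type_ring" unfolding G_def by (rule generate_field_is_subfield) simp
    have "K \<subseteq> G" unfolding G_def by (auto intro: generate_field.incl)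
    moreover have "u * s / u \<in> coord_ratios (u, s ^ 2, u * s)"
      using \<open>u \<noteq> 0\<close> unfolding coord_ratios_def by blast
    then have "s \<in> G" unfolding G_def using \<open>u \<noteq> 0\<close> by (auto intro: generate_field.incl)
    ultimately show ?thesis
      unfolding E_def using simple_extension_subring_incl subfieldE(1)[OF G] by blast
  qed
  ultimately show ?thesis by (simp add: field_of_point_def G_def E_def)
qed

lemma subfield_simple_extension_of_dimension:
  assumes "subfield K type_ring" "ring.dimension type_ring n K (ring.simple_extension type_ring K s)"
  shows "subfield (ring.simple_extension type_ring K s) type_ring"
proof -
  interpret field "type_ring :: 'a ring" by (rule field_from_type_algebra)
  show ?thesis
    using assms(2) simple_extension_is_subfield[OF assms(1), of s]
      finite_dimension_simple_extension[OF assms(1), of s]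
    by (auto simp: finite_dimension_def)
qed

locale fermat_conic_point =
  fixes p :: nat and z u s :: "'a::field"
  assumes char: "prime p" "CHAR('a) = p"
    and z_order: "\<And>j. z ^ j = 1 \<longleftrightarrow> p + 1 dvd j"
    and u_def: "u = - (1 + z ^ p)"
    and s_root: "s ^ (p + 1) = u"
begin

lemma z_pow_p_squared: "z ^ p ^ 2 = z"
proof -
  have "z ^ p ^ 2 = (z ^ (p + 1)) ^ (p - 1) * z"
    by (simp only: square_eq_Suc_mult_pred[OF prime_gt_0_nat[OF char(1)]]
        power_add power_mult power_one_right)
  also have "z ^ (p + 1) = 1" using z_order[of "p + 1"] by simp
  finally show ?thesis by simp
qed

lemma u_pow_p: "u ^ p = z * u"
proof -
  have frob: "prime CHAR('a)" "p = CHAR('a) ^ 1" using char by simp_all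
  have "u ^ p = - (1 + (z ^ p) ^ p)"
    unfolding u_def freshmans_dream_uminus[OF frob] freshmans_dream'[OF frob] by simp
  also have "(z ^ p) ^ p = z" using z_pow_p_squared by (simp add: power2_eq_square power_mult)
  also have "- (1 + z) = z * u"
    using z_order[of "p + 1"] by (simp add: u_def algebra_simps flip: power_Suc)
  finally show ?thesis .
qed

lemma u_nonzero: "u \<noteq> 0"
proof
  assume "u = 0"
  then have "z ^ p = -1" by (simp add: u_def add_eq_0_iff)
  then have "z = -1" using z_order[of "p + 1"] by (simp add: minus_equation_iff)
  then have "p + 1 dvd 2" using z_order[of 2] by simp
  then show False using prime_ge_2_nat[OF char(1)] by (simp add: nat_dvd_not_less)
qed

lemma s_pow_p_squared: "s ^ p ^ 2 = z * s"
proof -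
  have "u ^ (p - 1) * u = z * u"
    using u_pow_p prime_gt_0_nat[OF char(1)] by (simp flip: power_Suc2)
  then have "u ^ (p - 1) = z" using u_nonzero by simp
  have "s ^ p ^ 2 = (s ^ (p + 1)) ^ (p - 1) * s"
    by (simp only: square_eq_Suc_mult_pred[OF prime_gt_0_nat[OF char(1)]]
        power_add power_mult power_one_right)
  also have "\<dots> = z * s" by (simp only: s_root \<open>u ^ (p - 1) = z\<close>)
  finally show ?thesis .
qed

lemma u_in_finite_subfield: "u \<in> finite_subfield (p ^ 2)"
proof -
  have "u ^ p ^ 2 = (z * u) ^ p" by (simp add: power2_eq_square power_mult u_pow_p)
  also have "\<dots> = z ^ (p + 1) * u" by (simp add: power_mult_distrib u_pow_p)
  finally show ?thesis using z_order[of "p + 1"] by (simp add: finite_subfield_def)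
qed

lemma on_fermat_point: "on_fermat p (u, s ^ 2, u * s)"
proof -
  have u_power: "u ^ (p + 1) = z * u ^ 2" by (simp add: u_pow_p power2_eq_square)
  have s2_power: "(s ^ 2) ^ (p + 1) = u ^ 2"
  proof -
    have "(s ^ 2) ^ (p + 1) = (s ^ (p + 1)) ^ 2" by (simp only: power_mult[symmetric] mult.commute)
    then show ?thesis by (simp only: s_root)
  qed
  have us_power: "(u * s) ^ (p + 1) = z * u ^ 3"
    by (simp only: power_mult_distrib s_root) (simp add: u_pow_p power3_eq_cube)
  have "u ^ (p + 1) + (s ^ 2) ^ (p + 1) + (u * s) ^ (p + 1) = u ^ 2 * (z + 1 + z * u)"
    by (simp only: u_power s2_power us_power) (simp add: power2_eq_square power3_eq_cube algebra_simps)
  also have "z * u = - (z + 1)"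
    using z_order[of "p + 1"] by (simp add: u_def algebra_simps flip: power_Suc)
  finally show ?thesis by (simp add: on_fermat_def)
qed

lemma conjugates_inj: "inj_on (\<lambda>j. z ^ j * s) {..p}"
proof -
  have "z \<noteq> 0" "s \<noteq> 0" using z_order[of "p + 1"] s_root u_nonzero by auto
  have "z ^ i \<noteq> z ^ j" if "i < j" "j \<le> p" for i j
  proof
    assume "z ^ i = z ^ j"
    moreover have "z ^ i * z ^ (j - i) = z ^ j" using that by (simp flip: power_add)
    ultimately have "z ^ i * z ^ (j - i) = z ^ i * 1" by simp
    then have "p + 1 dvd j - i" using z_order \<open>z \<noteq> 0\<close> by simp
    then show False using that by (simp add: nat_dvd_not_less)
  qed
  then show ?thesis
    by (intro inj_onI) (metis atMost_iff linorder_neqE_nat mult_cancel_right \<open>s \<noteq> 0\<close>)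
qed

lemma dimension_simple_extension_root:
  "ring.dimension type_ring (p + 1) (finite_subfield (p ^ 2))
     (ring.simple_extension type_ring (finite_subfield (p ^ 2)) s)"
proof -
  have frob: "prime CHAR('a)" "p ^ 2 = CHAR('a) ^ 2" using char by simp_all
  have "s ^ Suc p \<in> finite_subfield (p ^ 2)" using s_root u_in_finite_subfield by simp
  then have "ring.simple_extension type_ring (finite_subfield (p ^ 2)) s
      = power_span (finite_subfield (p ^ 2)) s (Suc p)"
    by (rule simple_extension_eq_power_span[OF subfield_finite_subfield[OF frob]])
  moreover have "s ^ m \<notin> power_span (finite_subfield (p ^ 2)) s m" if "m < Suc p" for m
    using power_not_in_power_span[OF frob _ z_pow_p_squared s_pow_p_squared] that
      inj_on_subset[OF conjugates_inj] by simp
  then have "ring.dimension type_ring (Suc p) (finite_subfield (p ^ 2))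
      (power_span (finite_subfield (p ^ 2)) s (Suc p))"
    using prime_gt_0_nat[OF char(1)] by (intro dimension_power_span) (simp_all add: finite_subfield_def)
  ultimately show ?thesis by simp
qed

lemma dimension_field_of_point:
  "ring.dimension type_ring (p + 1) (finite_subfield (p ^ 2))
     (field_of_point (finite_subfield (p ^ 2)) (u, s ^ 2, u * s))"
proof -
  have "subfield (finite_subfield (p ^ 2)) (type_ring :: 'a ring)"
    using char by (intro subfield_finite_subfield) simp_all
  then show ?thesis
    using field_of_point_eq_simple_extension subfield_simple_extension_of_dimension
      dimension_simple_extension_root u_in_finite_subfield u_nonzero
    by metis
qed

end

theorem proposition7p2:
  fixes p :: nat
  assumes "prime p"
    and "CHAR('k::alg_closed_field) = p"
  shows "\<exists>(c :: 'k \<times> 'k \<times> 'k \<times> 'k \<times> 'k \<times> 'k) (t :: 'k \<times> 'k \<times> 'k).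
           (case c of (a, b, d, e, f, g) \<Rightarrow>
              {a, b, d, e, f, g} \<subseteq> finite_subfield (p^2) \<and> {a, b, d, e, f, g} \<noteq> {0}) \<and>
           proj_point t \<and> on_fermat p t \<and> quad_form c t = 0 \<and>
           ring.dimension (ring_of_type_algebra :: 'k ring) (p + 1)
             (finite_subfield (p^2)) (field_of_point (finite_subfield (p^2)) t)"
proof -
  obtain z :: 'k where z_order: "\<And>j. z ^ j = 1 \<longleftrightarrow> p + 1 dvd j"
    using exists_primitive_root_of_unity_Suc_char[OF assms] by blast
  define u where "u = - (1 + z ^ p)"
  have "\<exists>s :: 'k. s ^ (p + 1) = u" by (rule nth_root_exists) simp
  then obtain s where s: "s ^ (p + 1) = u" ..
  interpret point: fermat_conic_point p z u s
    by unfold_locales (use assms z_order u_def s in auto)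
  note point = point.u_nonzero point.u_in_finite_subfield point.on_fermat_point
    point.dimension_field_of_point
  have "- u \<in> finite_subfield (p ^ 2)" "(1::'k) \<in> finite_subfield (p ^ 2)"
    using point(2) by (simp_all add: finite_subfield_def freshmans_dream_uminus assms)
  then show ?thesis
    using point prime_gt_0_nat[OF assms(1)]
    by (intro exI[of _ "(0, 0, 1, - u, 0, 0)"] exI[of _ "(u, s ^ 2, u * s)"])
      (auto simp: proj_point_def quad_form_def power2_eq_square finite_subfield_def)
qed

end
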